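(* Every closed ball $B(p,r)$ of $(\mathbb H,d_\alpha)$ is a convex subset of $\mathbb R^3$ in the Euclidean sense.
   Context: $\mathbb H=\mathbb R^3$ with group law $(x,y,z)\cdot(x',y',z')=(x+x',y+y',z+z'+\tfrac12(xy'-yx'))$ and dilations $\delta_\lambda(x,y,z)=(\lambda x,\lambda y,\lambda^2z)$. Fix $\alpha>0$ such that $d_\alpha(p,q)=\inf\{r>0:\delta_{1/r}(p^{-1}\cdot q)\in B_\alpha\}$ is a distance on $\mathbb H$, where $B_\alpha$ is the closed Euclidean ball of radius $\alpha$ centered at $0$. $B(p,r)=\{q:d_\alpha(q,p)\le r\}$. *)

theory Defs
  imports "HOL-Analysis.Analysis"
begin

type_synonym heis = "real \<times> real \<times> real"

definition hmult :: "heis \<Rightarrow> heis \<Rightarrow> heis" where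
  "hmult p q = (case p of (x, y, z) \<Rightarrow> case q of (x', y', z') \<Rightarrow>
     (x + x', y + y', z + z' + (1/2) * (x * y' - y * x')))"

definition hinv :: "heis \<Rightarrow> heis" where
  "hinv p = (case p of (x, y, z) \<Rightarrow> (-x, -y, -z))"

definition hdil :: "real \<Rightarrow> heis \<Rightarrow> heis" where
  "hdil l p = (case p of (x, y, z) \<Rightarrow> (l * x, l * y, l^2 * z))"

definition euclid_ball :: "real \<Rightarrow> heis set" where
  "euclid_ball a = {(x, y, z). x^2 + y^2 + z^2 \<le> a^2}"

definition d_alpha :: "real \<Rightarrow> heis \<Rightarrow> heis \<Rightarrow> real" where
  "d_alpha a p q = Inf {r. r > 0 \<and> hdil (1/r) (hmult (hinv p) q) \<in> euclid_ball a}"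

definition is_distance :: "('b \<Rightarrow> 'b \<Rightarrow> real) \<Rightarrow> bool" where
  "is_distance d \<longleftrightarrow>
     (\<forall>p q. d p q \<ge> 0) \<and> (\<forall>p q. d p q = 0 \<longleftrightarrow> p = q) \<and>
     (\<forall>p q. d p q = d q p) \<and> (\<forall>p q w. d p w \<le> d p q + d q w)"

definition hball :: "real \<Rightarrow> heis \<Rightarrow> real \<Rightarrow> heis set" where
  "hball a p r = {q. d_alpha a q p \<le> r}"

end

theory Submission
  imports Defs
begin

(* Write v = q^-1 . p.  The heart of the proof is that the infimum defining
   d_alpha is attained: d_alpha a q p <= r holds exactly when the dilate
   delta_(1/r) v lies in the Euclidean ball B_alpha.  This rests on two
   elementary estimates for the dilations delta_l with 0 <= l <= 1: the
   Euclidean norm of delta_l w is monotone in l, and it lies between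
   l^2 |w| and l |w|.  The second gives a positive lower margin that rules
   out the infimum being approached only from above.

   Consequently B(p,r) is the preimage of B_alpha under the map
   q |-> delta_(1/r)(q^-1 . p), which is affine on R^3 (the group product
   is bilinear in its twisting term, and q^-1 . p is affine in q for fixed
   p).  Preimages of convex sets under affine maps are convex, which proves
   the theorem. *)

lemma norm_heis: "norm ((x, y, z) :: heis) = sqrt (x\<^sup>2 + y\<^sup>2 + z\<^sup>2)"
  by (simp add: norm_Pair)

lemma euclid_ball_eq_cball:
  assumes "a \<ge> 0"
  shows "euclid_ball a = cball 0 a"
proof -
  have "x\<^sup>2 + y\<^sup>2 + z\<^sup>2 \<le> a\<^sup>2 \<longleftrightarrow> sqrt (x\<^sup>2 + y\<^sup>2 + z\<^sup>2) \<le> a" for x y z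
    using real_sqrt_le_iff[of "x\<^sup>2 + y\<^sup>2 + z\<^sup>2" "a\<^sup>2"] assms by simp
  then show ?thesis
    by (auto simp: euclid_ball_def norm_heis)
qed

lemma hdil_hdil: "hdil l (hdil m w) = hdil (l * m) w"
  by (cases w) (simp add: hdil_def power_mult_distrib)

lemma norm_hdil_mono:
  assumes "0 \<le> l" "l \<le> m"
  shows "norm (hdil l w) \<le> norm (hdil m w)"
proof -
  obtain x y z where w: "w = (x, y, z)" by (cases w)
  have l2: "l\<^sup>2 \<le> m\<^sup>2" and l4: "(l\<^sup>2)\<^sup>2 \<le> (m\<^sup>2)\<^sup>2"
    using assms by (auto intro: power_mono)
  have "l\<^sup>2 * x\<^sup>2 + l\<^sup>2 * y\<^sup>2 + (l\<^sup>2)\<^sup>2 * z\<^sup>2 \<le> m\<^sup>2 * x\<^sup>2 + m\<^sup>2 * y\<^sup>2 + (m\<^sup>2)\<^sup>2 * z\<^sup>2"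
    using l2 l4 by (intro add_mono mult_right_mono) auto
  then show ?thesis
    by (simp add: w hdil_def norm_heis power_mult_distrib)
qed

lemma norm_hdil_bounds:
  assumes "0 \<le> l" "l \<le> 1"
  shows "l\<^sup>2 * norm w \<le> norm (hdil l w)" and "norm (hdil l w) \<le> l * norm w"
proof -
  obtain x y z where w: "w = (x, y, z)" by (cases w)
  have sq: "(norm (hdil l w))\<^sup>2 = l\<^sup>2 * x\<^sup>2 + l\<^sup>2 * y\<^sup>2 + (l\<^sup>2)\<^sup>2 * z\<^sup>2"
    by (simp add: w hdil_def norm_heis power_mult_distrib)
  have nw: "(norm w)\<^sup>2 = x\<^sup>2 + y\<^sup>2 + z\<^sup>2"
    by (simp add: w norm_heis)
  have l1: "l\<^sup>2 \<le> 1"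
    using assms by (simp add: power_le_one)
  then have l2: "(l\<^sup>2)\<^sup>2 \<le> l\<^sup>2"
    by (simp add: power2_eq_square mult_left_le)
  have "(l\<^sup>2 * norm w)\<^sup>2 = (l\<^sup>2)\<^sup>2 * x\<^sup>2 + (l\<^sup>2)\<^sup>2 * y\<^sup>2 + (l\<^sup>2)\<^sup>2 * z\<^sup>2"
    by (simp add: nw algebra_simps)
  also have "\<dots> \<le> (norm (hdil l w))\<^sup>2"
    unfolding sq using l2 by (intro add_mono mult_right_mono) auto
  finally show "l\<^sup>2 * norm w \<le> norm (hdil l w)"
    by (rule power2_le_imp_le) simp
  have "(norm (hdil l w))\<^sup>2 \<le> l\<^sup>2 * x\<^sup>2 + l\<^sup>2 * y\<^sup>2 + l\<^sup>2 * z\<^sup>2"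
    unfolding sq using l2 by (intro add_mono mult_right_mono) auto
  also have "\<dots> = (l * norm w)\<^sup>2"
    by (simp add: nw algebra_simps)
  finally show "norm (hdil l w) \<le> l * norm w"
    by (rule power2_le_imp_le) (simp add: assms)
qed

text \<open>The set of admissible radii \<open>{s > 0. \<delta>\<^sub>1\<^sub>/\<^sub>s v \<in> B\<^sub>a}\<close> is exactly
  \<open>[Inf, \<infinity>)\<close>: comparing with its infimum is the same as testing membership.\<close>
lemma Inf_dilation_radii_le_iff:
  assumes a: "a > 0" and r: "r > 0"
  shows "Inf {s. s > 0 \<and> hdil (1/s) v \<in> cball 0 a} \<le> r \<longleftrightarrow> hdil (1/r) v \<in> cball 0 a"
proof -
  define S where "S = {s. s > 0 \<and> hdil (1/s) v \<in> cball 0 a}"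
  have bdd: "bdd_below S"
    unfolding S_def by (rule bdd_belowI[of _ 0]) auto
  have ne: "S \<noteq> {}"
  proof -
    define s0 where "s0 = max 1 (norm v / a)"
    have "s0 \<ge> 1" "norm v / a \<le> s0"
      by (simp_all add: s0_def)
    then have s0: "s0 \<ge> 1" "norm v \<le> a * s0"
      using a by (simp_all add: pos_divide_le_eq mult.commute)
    have "norm (hdil (1/s0) v) \<le> (1/s0) * norm v"
      using s0 by (intro norm_hdil_bounds(2)) auto
    also have "\<dots> \<le> a"
      using s0 by (simp add: field_simps)
    finally have "s0 \<in> S"
      using s0 by (simp add: S_def)
    then show ?thesis by auto
  qed
  show ?thesis
    unfolding S_def[symmetric]
  proof
    assume "hdil (1/r) v \<in> cball 0 a"
    then have "r \<in> S" using r by (simp add: S_def)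
    then show "Inf S \<le> r" using bdd by (rule cInf_lower)
  next
    assume inf_le: "Inf S \<le> r"
    show "hdil (1/r) v \<in> cball 0 a"
    proof (rule ccontr)
      define N where "N = norm (hdil (1/r) v)"
      assume "hdil (1/r) v \<notin> cball 0 a"
      then have N: "N > a" by (simp add: N_def)
      text \<open>A factor \<open>l < 1\<close> with \<open>l\<^sup>2 N > a\<close> keeps the dilate outside the ball.\<close>
      define l where "l = sqrt ((a / N + 1) / 2)"
      have l2: "l\<^sup>2 = (a / N + 1) / 2"
        using a N by (simp add: l_def)
      have l: "0 < l" "l < 1"
        using a N by (auto simp: l_def field_simps)
      have "a < l\<^sup>2 * N"
        using a N unfolding l2 by (simp add: field_simps)
      also have "l\<^sup>2 * N \<le> norm (hdil l (hdil (1/r) v))"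
        unfolding N_def using l by (intro norm_hdil_bounds(1)) auto
      also have "hdil l (hdil (1/r) v) = hdil (1 / (r / l)) v"
        by (simp add: hdil_hdil)
      finally have outside: "a < norm (hdil (1 / (r / l)) v)" .
      have "r / l \<le> Inf S"
      proof (rule cInf_greatest[OF ne])
        fix s assume "s \<in> S"
        then have s: "s > 0" "norm (hdil (1/s) v) \<le> a" by (auto simp: S_def)
        show "r / l \<le> s"
        proof (rule ccontr)
          assume "\<not> r / l \<le> s"
          then have "norm (hdil (1 / (r / l)) v) \<le> norm (hdil (1/s) v)"
            using s r l by (intro norm_hdil_mono) (auto simp: field_simps)
          then show False using s outside by linarith
        qed
      qed
      moreover have "r < r / l" using r l by (simp add: field_simps)
      ultimately show False using inf_le by linarith
    qed
  qed
qed

lemma d_alpha_le_iff: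
  assumes "a > 0" "r > 0"
  shows "d_alpha a q p \<le> r \<longleftrightarrow> hdil (1/r) (hmult (hinv q) p) \<in> cball 0 a"
  unfolding d_alpha_def euclid_ball_eq_cball[OF less_imp_le[OF assms(1)]]
  by (rule Inf_dilation_radii_le_iff[OF assms])

lemma convex_vimage_affine:
  fixes f :: "'a::real_vector \<Rightarrow> 'b::real_vector"
  assumes f: "\<And>u v x y. u + v = 1 \<Longrightarrow> f (u *\<^sub>R x + v *\<^sub>R y) = u *\<^sub>R f x + v *\<^sub>R f y"
    and "convex C"
  shows "convex (f -` C)"
  using \<open>convex C\<close> unfolding convex_def by (simp add: f)

lemma linear_hdil: "linear (hdil l)"
  by (rule linearI) (auto simp: hdil_def algebra_simps split: prod.splits)

text \<open>For fixed \<open>p\<close>, the point \<open>q\<inverse> \<cdot> p\<close> depends affinely on \<open>q\<close>: the twisting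
  term of the group law is bilinear, hence affine in \<open>q\<close> once \<open>p\<close> is fixed.\<close>
lemma hmult_hinv_affine:
  assumes "u + v = 1"
  shows "hmult (hinv (u *\<^sub>R q1 + v *\<^sub>R q2)) p = u *\<^sub>R hmult (hinv q1) p + v *\<^sub>R hmult (hinv q2) p"
proof -
  obtain x1 y1 z1 x2 y2 z2 x y z where q: "q1 = (x1, y1, z1)" "q2 = (x2, y2, z2)" "p = (x, y, z)"
    by (metis prod_cases3)
  have v: "v = 1 - u" using assms by simp
  show ?thesis
    unfolding q v by (simp add: hmult_def hinv_def field_simps)
qed

theorem proposition2p2:
  fixes a :: real and p :: heis and r :: real
  assumes "a > 0" and "is_distance (d_alpha a)" and "r > 0"
  shows "convex (hball a p r)"
proof -
  define F where "F = (\<lambda>q. hdil (1/r) (hmult (hinv q) p))"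
  have ball_eq: "hball a p r = F -` cball 0 a"
    using d_alpha_le_iff[OF assms(1,3)] by (auto simp: hball_def F_def)
  have F_affine: "F (u *\<^sub>R q1 + v *\<^sub>R q2) = u *\<^sub>R F q1 + v *\<^sub>R F q2" if "u + v = 1" for u v q1 q2
    using linear_hdil[of "1/r"]
    by (simp add: F_def hmult_hinv_affine[OF that] linear_add linear_scale)
  show ?thesis
    unfolding ball_eq by (rule convex_vimage_affine[OF F_affine convex_cball])
qed

end
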